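(* The metric space $(\mathcal{GH}_1,d_{\mathrm{GH}})$ of (isometry classes of) compact metric pairs is separable.
   Context: A metric pair $(X,A)$ is a metric space $(X,d_X)$ with a non-empty closed subset $A\subset X$; it is compact if $X$ is compact; pairs are identified up to isometries of the spaces mapping the subsets onto each other. For subsets $X,Y$ of a metric space $(Z,\delta)$, $d^\delta_{\mathrm H}((X,A),(Y,B)):=d^\delta_{\mathrm H}(X,Y)+d^\delta_{\mathrm H}(A,B)$ (usual Hausdorff distances). A metric $\delta$ on $X\sqcup Y$ is admissible if it restricts to $d_X$ on $X$ and $d_Y$ on $Y$; the Gromov--Hausdorff distance of compact metric pairs is $d_{\mathrm{GH}}((X,A),(Y,B)):=\inf_\delta d^\delta_{\mathrm H}((X,A),(Y,B))$ over admissible $\delta$. $\mathcal{GH}_1$ is the space of compact metric pairs with this distance. *)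

theory Defs
  imports "HOL-Analysis.Analysis"
begin

definition compact_metric_pair :: "'a set \<Rightarrow> 'a set \<Rightarrow> ('a \<Rightarrow> 'a \<Rightarrow> real) \<Rightarrow> bool" where
  "compact_metric_pair X A d \<longleftrightarrow>
     Metric_space X d \<and>
     compact_space (Metric_space.mtopology X d) \<and>
     A \<noteq> {} \<and> A \<subseteq> X \<and>
     closedin (Metric_space.mtopology X d) A"

definition hausdist_in :: "('a \<Rightarrow> 'a \<Rightarrow> real) \<Rightarrow> 'a set \<Rightarrow> 'a set \<Rightarrow> real" where
  "hausdist_in \<delta> S T =
     (if S \<noteq> {} \<and> T \<noteq> {}
      then max (SUP s\<in>S. INF t\<in>T. \<delta> s t) (SUP t\<in>T. INF s\<in>S. \<delta> s t)
      else 0)"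

definition admissible ::
  "'a set \<Rightarrow> ('a \<Rightarrow> 'a \<Rightarrow> real) \<Rightarrow> 'b set \<Rightarrow> ('b \<Rightarrow> 'b \<Rightarrow> real)
     \<Rightarrow> ('a + 'b \<Rightarrow> 'a + 'b \<Rightarrow> real) \<Rightarrow> bool" where
  "admissible X dX Y dY \<delta> \<longleftrightarrow>
     Metric_space (X <+> Y) \<delta> \<and>
     (\<forall>x\<in>X. \<forall>x'\<in>X. \<delta> (Inl x) (Inl x') = dX x x') \<and>
     (\<forall>y\<in>Y. \<forall>y'\<in>Y. \<delta> (Inr y) (Inr y') = dY y y')"

definition dGH ::
  "'a set \<Rightarrow> 'a set \<Rightarrow> ('a \<Rightarrow> 'a \<Rightarrow> real) \<Rightarrow> 'b set \<Rightarrow> 'b set \<Rightarrow> ('b \<Rightarrow> 'b \<Rightarrow> real) \<Rightarrow> real" where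
  "dGH X A dX Y B dY =
     Inf {hausdist_in \<delta> (Inl ` X) (Inr ` Y) + hausdist_in \<delta> (Inl ` A) (Inr ` B) | \<delta>.
            admissible X dX Y dY \<delta>}"

end

theory Submission
  imports Defs
begin

(*
  A compact pair (X, A) is approximated by a finite pair: list the points x_0, ..., x_(n-1) of
  finite \<eta>-nets of X and of A, and raise every off-diagonal distance d(x_i, x_j) to a rational
  number strictly between d(x_i, x_j) + r and d(x_i, x_j) + 2r. The uniform raise keeps the
  triangle inequality, so the indices carry a rational metric d' with d \<le> d' \<le> d + 2r. Gluing
  X to the index space with distance d(x, x_i) + r between x and i is then admissible, and puts
  both the spaces and the subsets within Hausdorff distance \<eta> + r. Finite pairs with rational
  distances, realised on {0, ..., n-1} \<subseteq> \<real>, are coded by nat \<times> nat list \<times> rat list list,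
  hence form a countable family.
*)

lemma hausdist_in_nonneg:
  assumes nonneg: "\<And>s t. s \<in> S \<Longrightarrow> t \<in> T \<Longrightarrow> 0 \<le> \<delta> s t"
    and bounded: "\<And>s t. s \<in> S \<Longrightarrow> t \<in> T \<Longrightarrow> \<delta> s t \<le> K"
  shows "0 \<le> hausdist_in \<delta> S T"
proof (cases "S = {} \<or> T = {}")
  case True
  then show ?thesis by (auto simp: hausdist_in_def)
next
  case False
  then obtain s0 t0 where s0: "s0 \<in> S" and t0: "t0 \<in> T" by blast
  have inf_le: "(INF t\<in>T. \<delta> s t) \<le> K" if "s \<in> S" for s
  proof -
    have "bdd_below (\<delta> s ` T)"
      using nonneg[OF that] by (auto intro: bdd_belowI[of _ 0])
    then have "(INF t\<in>T. \<delta> s t) \<le> \<delta> s t0"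
      using t0 by (rule cINF_lower)
    also have "\<dots> \<le> K"
      using bounded[OF that t0] .
    finally show ?thesis .
  qed
  have "0 \<le> (INF t\<in>T. \<delta> s0 t)"
    using False nonneg s0 by (intro cINF_greatest) auto
  also have "\<dots> \<le> (SUP s\<in>S. INF t\<in>T. \<delta> s t)"
    using inf_le s0 by (intro cSUP_upper bdd_aboveI2) auto
  finally show ?thesis
    using False by (simp add: hausdist_in_def)
qed

lemma hausdist_in_le:
  assumes nonneg: "\<And>s t. s \<in> S \<Longrightarrow> t \<in> T \<Longrightarrow> 0 \<le> \<delta> s t" and "S \<noteq> {}"
    and S_near: "\<And>s. s \<in> S \<Longrightarrow> \<exists>t\<in>T. \<delta> s t \<le> c"
    and T_near: "\<And>t. t \<in> T \<Longrightarrow> \<exists>s\<in>S. \<delta> s t \<le> c"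
  shows "hausdist_in \<delta> S T \<le> c"
proof -
  have "T \<noteq> {}"
    using \<open>S \<noteq> {}\<close> S_near by blast
  have "(INF t\<in>T. \<delta> s t) \<le> c" if s: "s \<in> S" for s
  proof -
    obtain t where "t \<in> T" "\<delta> s t \<le> c"
      using S_near[OF s] by blast
    then show ?thesis
      using nonneg[OF s] by (meson bdd_belowI2 cINF_lower order_trans)
  qed
  moreover have "(INF s\<in>S. \<delta> s t) \<le> c" if t: "t \<in> T" for t
  proof -
    obtain s where "s \<in> S" "\<delta> s t \<le> c"
      using T_near[OF t] by blast
    then show ?thesis
      using nonneg t by (meson bdd_belowI2 cINF_lower order_trans)
  qed
  ultimately show ?thesis
    using \<open>S \<noteq> {}\<close> \<open>T \<noteq> {}\<close> by (simp add: hausdist_in_def cSUP_least)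
qed

lemma compact_metric_pairD:
  assumes "compact_metric_pair X A d"
  shows "Metric_space X d" "A \<subseteq> X" "A \<noteq> {}"
  using assms by (simp_all add: compact_metric_pair_def)

lemma compact_metric_pair_mbounded:
  assumes "compact_metric_pair X A d"
  shows "Metric_space.mbounded X d X"
proof -
  interpret Metric_space X d
    by (rule compact_metric_pairD[OF assms])
  show "mbounded X"
    using assms by (simp add: compact_metric_pair_def compact_space_def compactin_imp_mbounded)
qed

lemma admissible_mbounded:
  assumes adm: "admissible X dX Y dY \<delta>"
    and mX: "Metric_space X dX" and bX: "Metric_space.mbounded X dX X"
    and mY: "Metric_space Y dY" and bY: "Metric_space.mbounded Y dY Y"
  shows "Metric_space.mbounded (X <+> Y) \<delta> (X <+> Y)"
proof -
  interpret Metric_space "X <+> Y" \<delta>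
    using adm by (simp add: admissible_def)
  have "mbounded (Inl ` X)" and "mbounded (Inr ` Y)"
    using adm bX bY Metric_space.mbounded_alt[OF mX] Metric_space.mbounded_alt[OF mY]
    by (auto simp: admissible_def mbounded_alt)
  moreover have "X <+> Y = Inl ` X \<union> Inr ` Y"
    by (auto simp: Plus_def)
  ultimately show ?thesis
    by (metis mbounded_Un)
qed

lemma dGH_le_hausdist_in:
  assumes X: "compact_metric_pair X A dX" and Y: "compact_metric_pair Y B dY"
    and adm: "admissible X dX Y dY \<delta>"
  shows "dGH X A dX Y B dY \<le> hausdist_in \<delta> (Inl ` X) (Inr ` Y) + hausdist_in \<delta> (Inl ` A) (Inr ` B)"
  unfolding dGH_def
proof (rule cInf_lower)
  show "bdd_below {hausdist_in \<delta> (Inl ` X) (Inr ` Y) + hausdist_in \<delta> (Inl ` A) (Inr ` B) | \<delta>.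
      admissible X dX Y dY \<delta>}"
  proof (rule bdd_belowI, clarify)
    fix \<delta>' assume adm': "admissible X dX Y dY \<delta>'"
    then interpret Metric_space "X <+> Y" \<delta>'
      by (simp add: admissible_def)
    obtain K where K: "\<And>u v. u \<in> X <+> Y \<Longrightarrow> v \<in> X <+> Y \<Longrightarrow> \<delta>' u v \<le> K"
      using admissible_mbounded[OF adm' compact_metric_pairD(1)[OF X] compact_metric_pair_mbounded[OF X]
          compact_metric_pairD(1)[OF Y] compact_metric_pair_mbounded[OF Y]]
      by (auto simp: mbounded_alt)
    have "A \<subseteq> X" "B \<subseteq> Y"
      using compact_metric_pairD(2) X Y by blast+
    then have "0 \<le> hausdist_in \<delta>' (Inl ` X) (Inr ` Y)" "0 \<le> hausdist_in \<delta>' (Inl ` A) (Inr ` B)"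
      by (auto intro!: hausdist_in_nonneg K)
    then show "0 \<le> hausdist_in \<delta>' (Inl ` X) (Inr ` Y) + hausdist_in \<delta>' (Inl ` A) (Inr ` B)"
      by simp
  qed
qed (use adm in blast)

fun glue_dist :: "('a \<Rightarrow> 'a \<Rightarrow> real) \<Rightarrow> ('b \<Rightarrow> 'b \<Rightarrow> real) \<Rightarrow> ('b \<Rightarrow> 'a) \<Rightarrow> real
    \<Rightarrow> 'a + 'b \<Rightarrow> 'a + 'b \<Rightarrow> real" where
  "glue_dist dX dY \<phi> r (Inl x) (Inl x') = dX x x'"
| "glue_dist dX dY \<phi> r (Inl x) (Inr y) = dX x (\<phi> y) + r"
| "glue_dist dX dY \<phi> r (Inr y) (Inl x) = dX x (\<phi> y) + r"
| "glue_dist dX dY \<phi> r (Inr y) (Inr y') = dY y y'"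

lemma admissible_glue_dist:
  assumes X: "Metric_space X dX" and Y: "Metric_space Y dY"
    and \<phi>: "\<phi> ` Y \<subseteq> X" and "r > 0"
    and expand: "\<And>y y'. y \<in> Y \<Longrightarrow> y' \<in> Y \<Longrightarrow> dX (\<phi> y) (\<phi> y') \<le> dY y y'"
    and distort: "\<And>y y'. y \<in> Y \<Longrightarrow> y' \<in> Y \<Longrightarrow> dY y y' \<le> dX (\<phi> y) (\<phi> y') + 2 * r"
  shows "admissible X dX Y dY (glue_dist dX dY \<phi> r)"
proof -
  interpret X: Metric_space X dX by (rule X)
  interpret Y: Metric_space Y dY by (rule Y)
  have "Metric_space (X <+> Y) (glue_dist dX dY \<phi> r)"
  proof
    fix u v
    show "0 \<le> glue_dist dX dY \<phi> r u v"
      using \<open>r > 0\<close> by (cases u; cases v) auto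
    show "glue_dist dX dY \<phi> r u v = glue_dist dX dY \<phi> r v u"
      by (cases u; cases v) (auto simp: X.commute Y.commute)
  next
    fix u v assume "u \<in> X <+> Y" "v \<in> X <+> Y"
    then show "glue_dist dX dY \<phi> r u v = 0 \<longleftrightarrow> u = v"
      using \<open>r > 0\<close> by (elim PlusE) (auto simp: add_nonneg_eq_0_iff)
  next
    fix u v w assume "u \<in> X <+> Y" "v \<in> X <+> Y" "w \<in> X <+> Y"
    then show "glue_dist dX dY \<phi> r u w \<le> glue_dist dX dY \<phi> r u v + glue_dist dX dY \<phi> r v w"
      using \<phi> \<open>r > 0\<close> X.triangle X.commute Y.triangle expand distort
      by (elim PlusE) (simp; smt (verit) image_subset_iff)+
  qed
  then show ?thesis
    by (simp add: admissible_def)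
qed

lemma hausdist_in_glue_dist_le:
  fixes X :: "'a set" and Y :: "'b set"
  assumes X: "Metric_space X dX" and "X' \<subseteq> X" and "X' \<noteq> {}" and "\<phi> ` Y \<subseteq> X'" and "r \<ge> 0"
    and net: "X' \<subseteq> (\<Union>y\<in>Y. Metric_space.mball X dX (\<phi> y) \<eta>)"
  shows "hausdist_in (glue_dist dX dY \<phi> r) (Inl ` X') (Inr ` Y) \<le> \<eta> + r"
proof -
  interpret Metric_space X dX by (rule X)
  obtain x y where "x \<in> mball (\<phi> y) \<eta>"
    using net \<open>X' \<noteq> {}\<close> by blast
  then have "\<eta> > 0"
    by (meson in_mball le_less_trans nonneg)
  show ?thesis
  proof (rule hausdist_in_le)
    fix s :: "'a + 'b" assume "s \<in> Inl ` X'"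
    then obtain x where x: "s = Inl x" "x \<in> X'" by blast
    with net obtain y where "y \<in> Y" "dX x (\<phi> y) < \<eta>"
      by (auto simp: commute)
    then show "\<exists>t\<in>Inr ` Y. glue_dist dX dY \<phi> r s t \<le> \<eta> + r"
      using x by force
  next
    fix t :: "'a + 'b" assume "t \<in> Inr ` Y"
    then obtain y where y: "t = Inr y" "y \<in> Y" by blast
    then have "\<phi> y \<in> X'" "\<phi> y \<in> X"
      using assms by auto
    then show "\<exists>s\<in>Inl ` X'. glue_dist dX dY \<phi> r s t \<le> \<eta> + r"
      using y \<open>\<eta> > 0\<close> by (intro bexI[of _ "Inl (\<phi> y)"]) auto
  qed (use assms in auto)
qed

lemma dGH_le_glue_dist:
  assumes X: "compact_metric_pair X A dX" and Y: "compact_metric_pair Y B dY"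
    and \<phi>: "\<phi> ` Y \<subseteq> X" "\<phi> ` B \<subseteq> A" and "r > 0"
    and expand: "\<And>y y'. y \<in> Y \<Longrightarrow> y' \<in> Y \<Longrightarrow> dX (\<phi> y) (\<phi> y') \<le> dY y y'"
    and distort: "\<And>y y'. y \<in> Y \<Longrightarrow> y' \<in> Y \<Longrightarrow> dY y y' \<le> dX (\<phi> y) (\<phi> y') + 2 * r"
    and net_X: "X \<subseteq> (\<Union>y\<in>Y. Metric_space.mball X dX (\<phi> y) \<eta>)"
    and net_A: "A \<subseteq> (\<Union>y\<in>B. Metric_space.mball X dX (\<phi> y) \<eta>)"
  shows "dGH X A dX Y B dY \<le> 2 * (\<eta> + r)"
proof -
  note mX = compact_metric_pairD(1)[OF X] and mY = compact_metric_pairD(1)[OF Y]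
  have "A \<subseteq> X" "A \<noteq> {}"
    using compact_metric_pairD[OF X] by auto
  let ?\<delta> = "glue_dist dX dY \<phi> r"
  have "dGH X A dX Y B dY \<le> hausdist_in ?\<delta> (Inl ` X) (Inr ` Y) + hausdist_in ?\<delta> (Inl ` A) (Inr ` B)"
    using X Y by (rule dGH_le_hausdist_in) (use admissible_glue_dist[OF mX mY] assms in auto)
  also have "\<dots> \<le> (\<eta> + r) + (\<eta> + r)"
  proof (intro add_mono)
    show "hausdist_in ?\<delta> (Inl ` X) (Inr ` Y) \<le> \<eta> + r"
      using \<open>A \<subseteq> X\<close> \<open>A \<noteq> {}\<close> \<phi> \<open>r > 0\<close> net_X
      by (intro hausdist_in_glue_dist_le[OF mX]) auto
    show "hausdist_in ?\<delta> (Inl ` A) (Inr ` B) \<le> \<eta> + r"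
      using \<open>A \<subseteq> X\<close> \<open>A \<noteq> {}\<close> \<phi> \<open>r > 0\<close> net_A
      by (intro hausdist_in_glue_dist_le[OF mX]) auto
  qed
  finally show ?thesis
    by simp
qed

lemma finite_compact_metric_pair:
  assumes Y: "Metric_space Y d" and "finite Y" "B \<subseteq> Y" "B \<noteq> {}"
  shows "compact_metric_pair Y B d"
proof -
  interpret Metric_space Y d by (rule Y)
  have "compactin mtopology B"
    using assms by (intro finite_imp_compactin) (auto intro: finite_subset)
  then have "closedin mtopology B"
    by (rule compactin_imp_closedin[OF Hausdorff_space_mtopology])
  moreover have "compact_space mtopology"
    using \<open>finite Y\<close> by (simp add: compact_space_def finite_imp_compactin)
  ultimately show ?thesis
    using assms by (simp add: compact_metric_pair_def)
qed

(* The value 0 off the index points is forced by Metric_space, whose nonnegativity and symmetry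
   axioms constrain the distance on the whole type. *)
definition rat_index_dist :: "nat \<Rightarrow> (nat \<Rightarrow> nat \<Rightarrow> rat) \<Rightarrow> real \<Rightarrow> real \<Rightarrow> real" where
  "rat_index_dist n Q x y =
     (if x \<in> real ` {..<n} \<and> y \<in> real ` {..<n} then of_rat (Q (nat \<lfloor>x\<rfloor>) (nat \<lfloor>y\<rfloor>)) else 0)"

definition decode_rat_pair ::
  "nat \<times> nat list \<times> rat list list \<Rightarrow> real set \<times> real set \<times> (real \<Rightarrow> real \<Rightarrow> real)" where
  "decode_rat_pair = (\<lambda>(n, bs, ds). (real ` {..<n}, real ` set bs, rat_index_dist n (\<lambda>i j. ds ! i ! j)))"

lemma rat_index_dist_tabulate:
  "rat_index_dist n (\<lambda>i j. map (\<lambda>i. map (Q i) [0..<n]) [0..<n] ! i ! j) = rat_index_dist n Q"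
  by (auto simp: rat_index_dist_def fun_eq_iff)

lemma Metric_space_rat_index_dist:
  assumes diag: "\<And>i. Q i i = 0" and sym: "\<And>i j. Q i j = Q j i"
    and pos: "\<And>i j. i < n \<Longrightarrow> j < n \<Longrightarrow> i \<noteq> j \<Longrightarrow> 0 < Q i j"
    and triangle: "\<And>i j k. i < n \<Longrightarrow> j < n \<Longrightarrow> k < n \<Longrightarrow> Q i k \<le> Q i j + Q j k"
  shows "Metric_space (real ` {..<n}) (rat_index_dist n Q)"
proof
  fix x y
  show "0 \<le> rat_index_dist n Q x y"
    using pos diag by (fastforce simp: rat_index_dist_def less_imp_le)
  show "rat_index_dist n Q x y = rat_index_dist n Q y x"
    by (simp add: rat_index_dist_def sym)
next
  fix x y assume "x \<in> real ` {..<n}" "y \<in> real ` {..<n}"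
  then show "rat_index_dist n Q x y = 0 \<longleftrightarrow> x = y"
    using pos diag by (auto simp: rat_index_dist_def) (metis less_irrefl)
next
  fix x y z assume "x \<in> real ` {..<n}" "y \<in> real ` {..<n}" "z \<in> real ` {..<n}"
  then show "rat_index_dist n Q x z \<le> rat_index_dist n Q x y + rat_index_dist n Q y z"
    using triangle by (auto simp: rat_index_dist_def of_rat_less_eq simp flip: of_rat_add)
qed

lemma rat_dist_approx:
  fixes dX :: "'a \<Rightarrow> 'a \<Rightarrow> real" and p :: "nat \<Rightarrow> 'a"
  assumes nonneg: "\<And>x y. 0 \<le> dX x y" and sym: "\<And>x y. dX x y = dX y x" and "r > 0"
  obtains Q :: "nat \<Rightarrow> nat \<Rightarrow> rat" where "\<And>i. Q i i = 0" "\<And>i j. Q i j = Q j i"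
    "\<And>i j. i \<noteq> j \<Longrightarrow> 0 < Q i j"
    "\<And>i j. i \<noteq> j \<Longrightarrow> dX (p i) (p j) + r / 2 < of_rat (Q i j)"
    "\<And>i j. i \<noteq> j \<Longrightarrow> of_rat (Q i j) < dX (p i) (p j) + r"
proof -
  have "\<forall>i j. \<exists>q. dX (p i) (p j) + r / 2 < of_rat q \<and> of_rat q < dX (p i) (p j) + r"
    using \<open>r > 0\<close> by (intro allI of_rat_dense) simp
  then obtain Q0 where Q0: "\<And>i j. dX (p i) (p j) + r / 2 < of_rat (Q0 i j) \<and> of_rat (Q0 i j) < dX (p i) (p j) + r"
    by metis
  define Q where "Q i j = (if i = j then 0 else if i < j then Q0 i j else Q0 j i)" for i j
  show ?thesis
  proof
    fix i j :: nat assume "i \<noteq> j"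
    then show lower: "dX (p i) (p j) + r / 2 < of_rat (Q i j)" and "of_rat (Q i j) < dX (p i) (p j) + r"
      using Q0[of i j] Q0[of j i] sym[of "p i" "p j"] by (auto simp: Q_def)
    have "0 < (of_rat (Q i j) :: real)"
      using lower nonneg[of "p i" "p j"] \<open>r > 0\<close> by linarith
    then show "0 < Q i j"
      by simp
  qed (auto simp: Q_def)
qed

lemma Metric_space_rat_dist_approx:
  assumes X: "Metric_space X dX" and p: "\<And>i. i < n \<Longrightarrow> p i \<in> X"
    and diag: "\<And>i. Q i i = 0" and sym: "\<And>i j. Q i j = Q j i" and pos: "\<And>i j. i \<noteq> j \<Longrightarrow> 0 < Q i j"
    and lower: "\<And>i j. i \<noteq> j \<Longrightarrow> dX (p i) (p j) + r / 2 < of_rat (Q i j)"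
    and upper: "\<And>i j. i \<noteq> j \<Longrightarrow> of_rat (Q i j) < dX (p i) (p j) + r"
  shows "Metric_space (real ` {..<n}) (rat_index_dist n Q)"
proof (rule Metric_space_rat_index_dist[OF diag sym])
  interpret Metric_space X dX by (rule X)
  have nonneg_Q: "0 \<le> Q a b" for a b
    using pos[of a b] diag[of a] by (cases "a = b") auto
  fix i j k assume "i < n" "j < n" "k < n"
  consider "i = k" | "i = j" | "j = k" | "i \<noteq> k" "i \<noteq> j" "j \<noteq> k"
    by blast
  then show "Q i k \<le> Q i j + Q j k"
  proof cases
    case 4
    have "of_rat (Q i k) < dX (p i) (p k) + r"
      using upper \<open>i \<noteq> k\<close> by blast
    also have "\<dots> \<le> dX (p i) (p j) + dX (p j) (p k) + r"
      using triangle p \<open>i < n\<close> \<open>j < n\<close> \<open>k < n\<close> by simp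
    also have "\<dots> < of_rat (Q i j) + of_rat (Q j k)"
      using lower[of i j] lower[of j k] 4 by simp
    finally show ?thesis
      by (simp add: of_rat_less flip: of_rat_add)
  qed (use diag nonneg_Q in auto)
qed (rule pos)

lemma rat_pair_model:
  assumes X: "Metric_space X dX" and "set xs \<subseteq> X" and "T \<subseteq> set xs" "T \<noteq> {}" and "r > 0"
  obtains Y B d \<phi> where "(Y, B, d) \<in> range decode_rat_pair" "compact_metric_pair Y B d"
    "\<phi> ` Y = set xs" "\<phi> ` B = T"
    "\<And>y y'. y \<in> Y \<Longrightarrow> y' \<in> Y \<Longrightarrow> dX (\<phi> y) (\<phi> y') \<le> d y y'"
    "\<And>y y'. y \<in> Y \<Longrightarrow> y' \<in> Y \<Longrightarrow> d y y' \<le> dX (\<phi> y) (\<phi> y') + r"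
proof -
  interpret Metric_space X dX by (rule X)
  obtain Q where diag: "\<And>i. Q i i = 0" and sym: "\<And>i j. Q i j = Q j i"
    and pos: "\<And>i j. i \<noteq> j \<Longrightarrow> 0 < Q i j"
    and lower: "\<And>i j. i \<noteq> j \<Longrightarrow> dX (xs ! i) (xs ! j) + r / 2 < of_rat (Q i j)"
    and upper: "\<And>i j. i \<noteq> j \<Longrightarrow> of_rat (Q i j) < dX (xs ! i) (xs ! j) + r"
    using rat_dist_approx[where dX = dX and p = "(!) xs", OF nonneg commute \<open>r > 0\<close>] by blast
  define n where "n = length xs"
  have xs_X: "xs ! i \<in> X" if "i < n" for i
    using that \<open>set xs \<subseteq> X\<close> by (auto simp: n_def)
  define bs where "bs = filter (\<lambda>i. xs ! i \<in> T) [0..<n]"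
  define Y where "Y = real ` {..<n}"
  define B where "B = real ` set bs"
  define d where "d = rat_index_dist n Q"
  define \<phi> :: "real \<Rightarrow> 'a" where "\<phi> y = xs ! nat \<lfloor>y\<rfloor>" for y
  have "decode_rat_pair (n, bs, map (\<lambda>i. map (Q i) [0..<n]) [0..<n]) = (Y, B, d)"
    by (simp add: decode_rat_pair_def rat_index_dist_tabulate Y_def B_def d_def)
  then have "(Y, B, d) \<in> range decode_rat_pair"
    by (metis rangeI)
  moreover have "Metric_space Y d"
    unfolding Y_def d_def by (rule Metric_space_rat_dist_approx[OF X xs_X diag sym pos lower upper])
  moreover have "\<phi> ` B = T"
    using \<open>T \<subseteq> set xs\<close> by (force simp: B_def bs_def \<phi>_def n_def in_set_conv_nth)
  moreover have "\<phi> ` Y = set xs"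
    by (force simp: Y_def \<phi>_def n_def in_set_conv_nth)
  moreover have "B \<subseteq> Y" "B \<noteq> {}"
    using \<open>\<phi> ` B = T\<close> \<open>T \<noteq> {}\<close> by (auto simp: B_def bs_def Y_def)
  moreover have "dX (\<phi> y) (\<phi> y') \<le> d y y' \<and> d y y' \<le> dX (\<phi> y) (\<phi> y') + r"
    if yy': "y \<in> Y" "y' \<in> Y" for y y'
  proof -
    obtain i j where "i < n" "j < n" "y = real i" "y' = real j"
      using yy' by (auto simp: Y_def)
    then show ?thesis
      using lower[of i j] upper[of i j] diag[of i] xs_X \<open>r > 0\<close>
      by (cases "i = j") (auto simp: d_def rat_index_dist_def \<phi>_def)
  qed
  ultimately show ?thesis
    using that finite_compact_metric_pair[of Y d B] by (auto simp: Y_def)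
qed

lemma compact_metric_pair_finite_nets:
  assumes X: "compact_metric_pair X A d" and "\<eta> > 0"
  obtains F T where "finite F" "F \<subseteq> X" "T \<subseteq> F" "T \<subseteq> A" "T \<noteq> {}"
    "X \<subseteq> (\<Union>x\<in>F. Metric_space.mball X d x \<eta>)" "A \<subseteq> (\<Union>x\<in>T. Metric_space.mball X d x \<eta>)"
proof -
  interpret Metric_space X d
    by (rule compact_metric_pairD[OF X])
  have "compact_space mtopology" "closedin mtopology A" "A \<noteq> {}"
    using X by (auto simp: compact_metric_pair_def)
  then have "mtotally_bounded X" "mtotally_bounded A"
    by (auto simp: compact_space_def closedin_compact_space compactin_imp_mtotally_bounded)
  obtain S where "finite S" "S \<subseteq> X" "X \<subseteq> (\<Union>x\<in>S. mball x \<eta>)"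
    using \<open>mtotally_bounded X\<close> \<open>\<eta> > 0\<close> unfolding mtotally_bounded_def by meson
  moreover obtain T where "finite T" "T \<subseteq> A" "A \<subseteq> (\<Union>x\<in>T. mball x \<eta>)"
    using \<open>mtotally_bounded A\<close> \<open>\<eta> > 0\<close> unfolding mtotally_bounded_def by meson
  moreover have "T \<noteq> {}" "A \<subseteq> X"
    using \<open>A \<subseteq> (\<Union>x\<in>T. mball x \<eta>)\<close> compact_metric_pairD[OF X] by auto
  ultimately show ?thesis
    by (intro that[of "S \<union> T" T]) (auto simp: UN_Un le_supI1)
qed

lemma rat_pair_approx:
  assumes X: "compact_metric_pair X A dX" and "\<epsilon> > 0"
  obtains Y B d where "(Y, B, d) \<in> range decode_rat_pair" "compact_metric_pair Y B d"
    "dGH X A dX Y B d < \<epsilon>"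
proof -
  interpret Metric_space X dX
    by (rule compact_metric_pairD[OF X])
  define \<eta> where "\<eta> = \<epsilon> / 8"
  have "\<eta> > 0"
    using \<open>\<epsilon> > 0\<close> by (simp add: \<eta>_def)
  obtain F T where "finite F" "F \<subseteq> X" "T \<subseteq> F" "T \<subseteq> A" "T \<noteq> {}"
    and net_X: "X \<subseteq> (\<Union>x\<in>F. mball x \<eta>)" and net_A: "A \<subseteq> (\<Union>x\<in>T. mball x \<eta>)"
    by (rule compact_metric_pair_finite_nets[OF X \<open>\<eta> > 0\<close>])
  obtain xs where "set xs = F"
    using \<open>finite F\<close> finite_list by blast
  then have xs: "set xs \<subseteq> X" "T \<subseteq> set xs"
    using \<open>F \<subseteq> X\<close> \<open>T \<subseteq> F\<close> by auto
  have "2 * \<eta> > 0"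
    using \<open>\<eta> > 0\<close> by simp
  obtain Y B d \<phi> where Y: "(Y, B, d) \<in> range decode_rat_pair" "compact_metric_pair Y B d"
    and "\<phi> ` Y = set xs" "\<phi> ` B = T"
    and expand: "\<And>y y'. y \<in> Y \<Longrightarrow> y' \<in> Y \<Longrightarrow> dX (\<phi> y) (\<phi> y') \<le> d y y'"
    and distort: "\<And>y y'. y \<in> Y \<Longrightarrow> y' \<in> Y \<Longrightarrow> d y y' \<le> dX (\<phi> y) (\<phi> y') + 2 * \<eta>"
    using rat_pair_model[OF Metric_space_axioms xs \<open>T \<noteq> {}\<close> \<open>2 * \<eta> > 0\<close>] by blast
  then have "\<phi> ` Y = F"
    using \<open>set xs = F\<close> by simp
  have "dGH X A dX Y B d \<le> 2 * (\<eta> + \<eta>)"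
  proof (rule dGH_le_glue_dist[OF X Y(2)])
    show "X \<subseteq> (\<Union>y\<in>Y. mball (\<phi> y) \<eta>)" "A \<subseteq> (\<Union>y\<in>B. mball (\<phi> y) \<eta>)"
      using net_X net_A by (simp_all flip: \<open>\<phi> ` Y = F\<close> \<open>\<phi> ` B = T\<close>)
  qed (use \<open>\<phi> ` Y = F\<close> \<open>\<phi> ` B = T\<close> \<open>F \<subseteq> X\<close> \<open>T \<subseteq> A\<close> \<open>\<eta> > 0\<close> expand distort in auto)
  also have "\<dots> < \<epsilon>"
    using \<open>\<epsilon> > 0\<close> by (simp add: \<eta>_def)
  finally show ?thesis
    using that Y by blast
qed

theorem theorem3p7:
  "\<exists>D :: (real set \<times> real set \<times> (real \<Rightarrow> real \<Rightarrow> real)) set.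
     countable D \<and>
     (\<forall>(Y, B, dY) \<in> D. compact_metric_pair Y B dY) \<and>
     (\<forall>(X :: 'a set) A dX. compact_metric_pair X A dX \<longrightarrow>
        (\<forall>\<epsilon>>0. \<exists>(Y, B, dY) \<in> D. dGH X A dX Y B dY < \<epsilon>))"
proof (intro exI conjI)
  let ?D = "{(Y, B, d) \<in> range decode_rat_pair. compact_metric_pair Y B d}"
  show "countable ?D"
    by (rule countable_subset[of _ "range decode_rat_pair"]) auto
  show "\<forall>(Y, B, dY) \<in> ?D. compact_metric_pair Y B dY"
    by blast
  show "\<forall>(X :: 'a set) A dX. compact_metric_pair X A dX \<longrightarrow>
      (\<forall>\<epsilon>>0. \<exists>(Y, B, dY) \<in> ?D. dGH X A dX Y B dY < \<epsilon>)"
    by (blast elim: rat_pair_approx)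
qed

end
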